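(* Let $\mathcal{U}$ be a finite-dimensional real Hilbert space, let $\mathcal{W}$ be a real Hilbert space, let $\phi:\mathcal{U}\to\mathcal{B}(\mathcal{U},\mathcal{W})$ be a map, let $(u_i,y_i)\in\mathcal{U}\times\mathcal{U}$, $i=1,\dots,n$, be data, and let $\gamma>0$. For $Q\in\mathcal{B}(\mathcal{W})$ let $L(Q)=\sum_{i=1}^n\|\phi(u_i)^*Q\phi(u_i)u_i-y_i\|_{\mathcal{U}}^2$, and let $\Phi\in\mathcal{B}(\mathcal{U}^n,\mathcal{W})$ be defined by $\Phi(v_1,\dots,v_n)=\sum_{i=1}^n\phi(u_i)v_i$. Consider the problems $$\text{(P)}\quad \min_{Q\in\mathcal{B}^+(\mathcal{W})} L(Q)+\gamma\|Q\|,\qquad \text{(P$'$)}\quad \min_{M\in\mathcal{B}^+(\mathcal{U}^n)} L(\Phi M\Phi^* )+\gamma\|\Phi M\Phi^*\|,$$ where $\|\cdot\|$ is the operator norm. Then a solution (minimizer) of (P) exists if and only if a solution of (P$'$) exists. Moreover, if it exists, a solution of (P) is given by $\hat Q=\Phi M\Phi^*$, where $M\in\mathcal{B}^+(\mathcal{U}^n)$ is a solution of (P$'$).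
   Context: $\mathcal{U}^n$ is the $n$-fold Cartesian product with inner product $\sum_i\langle u_i,v_i\rangle_{\mathcal{U}}$. $\mathcal{B}(\mathcal{X},\mathcal{Y})$ denotes bounded linear operators, $\mathcal{B}(\mathcal{X})=\mathcal{B}(\mathcal{X},\mathcal{X})$, $^*$ is the adjoint. An operator $G$ on a Hilbert space $\mathcal{H}$ is nonnegative if $\langle Gu,u\rangle_{\mathcal{H}}\ge0$ for all $u$ (self-adjointness not required); $\mathcal{B}^+(\mathcal{H})$ is the set of nonnegative operators in $\mathcal{B}(\mathcal{H})$. *)

theory Defs
  imports "HOL-Analysis.Analysis"
begin

definition badj :: "('a::real_inner \<Rightarrow>\<^sub>L 'b::real_inner) \<Rightarrow> ('b \<Rightarrow>\<^sub>L 'a)" where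
  "badj f = Blinfun (adjoint (blinfun_apply f))"

text \<open>Nonnegative operator: \<langle>G u, u\<rangle> \<ge> 0 for all u (self-adjointness not required).\<close>
definition nonneg_op :: "('a::real_inner \<Rightarrow>\<^sub>L 'a) \<Rightarrow> bool" where
  "nonneg_op G \<longleftrightarrow> (\<forall>v. 0 \<le> inner (blinfun_apply G v) v)"

definition loss ::
  "('u::real_inner \<Rightarrow> ('u \<Rightarrow>\<^sub>L 'w::real_inner)) \<Rightarrow> ('n::finite \<Rightarrow> 'u) \<Rightarrow> ('n \<Rightarrow> 'u)
     \<Rightarrow> ('w \<Rightarrow>\<^sub>L 'w) \<Rightarrow> real" where
  "loss \<phi> u y Q = (\<Sum>i\<in>UNIV. (norm (blinfun_apply (badj (\<phi> (u i)))
        (blinfun_apply Q (blinfun_apply (\<phi> (u i)) (u i))) - y i))\<^sup>2)"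

definition Phi_op ::
  "('u::real_inner \<Rightarrow> ('u \<Rightarrow>\<^sub>L 'w::real_inner)) \<Rightarrow> ('n::finite \<Rightarrow> 'u) \<Rightarrow> (('u ^ 'n) \<Rightarrow>\<^sub>L 'w)" where
  "Phi_op \<phi> u = Blinfun (\<lambda>v. \<Sum>i\<in>UNIV. blinfun_apply (\<phi> (u i)) (v $ i))"

definition objP where
  "objP \<phi> u y \<gamma> Q = loss \<phi> u y Q + \<gamma> * norm Q"

definition objP' where
  "objP' \<phi> u y \<gamma> M = objP \<phi> u y \<gamma> (Phi_op \<phi> u o\<^sub>L M o\<^sub>L badj (Phi_op \<phi> u))"

definition solves_P where
  "solves_P \<phi> u y \<gamma> Q \<longleftrightarrow> nonneg_op Q \<and> (\<forall>Q'. nonneg_op Q' \<longrightarrow> objP \<phi> u y \<gamma> Q \<le> objP \<phi> u y \<gamma> Q')"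

definition solves_P' where
  "solves_P' \<phi> u y \<gamma> M \<longleftrightarrow> nonneg_op M \<and> (\<forall>M'. nonneg_op M' \<longrightarrow> objP' \<phi> u y \<gamma> M \<le> objP' \<phi> u y \<gamma> M')"

end

theory Submission
  imports Defs
begin

text \<open>Every \<open>\<phi>(u\<^sub>i)\<close> maps into the range \<open>R\<close> of \<open>\<Phi>\<close>, a finite-dimensional subspace.
  With \<open>P\<close> the orthogonal projection onto \<open>R\<close>, compressing \<open>Q\<close> to \<open>P Q P\<close> does not change the loss,
  which only sees \<open>Q\<close> through \<open>\<phi>(u\<^sub>i)\<close> and its adjoint, and does not increase the operator norm.
  Moreover \<open>P Q P = \<Phi> M \<Phi>\<^sup>*\<close> for the nonnegative \<open>M = S Q S\<^sup>*\<close>, where \<open>S\<close> is a right inverse of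
  \<open>\<Phi>\<close> on \<open>R\<close>. Hence every value of (P) is matched or beaten by (P'), while \<open>M \<mapsto> \<Phi> M \<Phi>\<^sup>*\<close> maps
  feasible points of (P') to feasible points of (P) with the same value.\<close>

lemma is_arg_min_reduction:
  fixes g :: "'b \<Rightarrow> 'c::linorder"
  assumes into: "\<And>a. P a \<Longrightarrow> Q (F a)"
    and onto: "\<And>b. Q b \<Longrightarrow> \<exists>a. P a \<and> g (F a) \<le> g b"
  shows is_arg_min_reduction_image: "is_arg_min (g \<circ> F) P a \<Longrightarrow> is_arg_min g Q (F a)"
    and ex_is_arg_min_reduction_iff: "(\<exists>b. is_arg_min g Q b) \<longleftrightarrow> (\<exists>a. is_arg_min (g \<circ> F) P a)"
proof -
  show image: "is_arg_min g Q (F a)" if "is_arg_min (g \<circ> F) P a" for a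
  proof -
    have "g (F a) \<le> g b" if "Q b" for b
      using onto[OF \<open>Q b\<close>] \<open>is_arg_min (g \<circ> F) P a\<close> by (force simp: is_arg_min_linorder)
    with that into show ?thesis by (simp add: is_arg_min_linorder)
  qed
  have "\<exists>a. is_arg_min (g \<circ> F) P a" if "is_arg_min g Q b" for b
  proof -
    have "Q b"
      using that by (simp add: is_arg_min_linorder)
    then obtain a where "P a" "g (F a) \<le> g b"
      using onto by blast
    with that into have "is_arg_min (g \<circ> F) P a"
      by (force simp: is_arg_min_linorder)
    then show ?thesis ..
  qed
  with image show "(\<exists>b. is_arg_min g Q b) \<longleftrightarrow> (\<exists>a. is_arg_min (g \<circ> F) P a)"
    by blast
qed

lemma inner_linear_euclidean_domain:
  fixes f :: "'a::euclidean_space \<Rightarrow> 'b::real_inner"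
  assumes "linear f"
  shows "f x \<bullet> y = x \<bullet> (\<Sum>i\<in>Basis. (f i \<bullet> y) *\<^sub>R i)"
proof -
  interpret linear f by fact
  have "f x \<bullet> y = f (\<Sum>i\<in>Basis. (x \<bullet> i) *\<^sub>R i) \<bullet> y"
    by (simp add: euclidean_representation)
  also have "\<dots> = (\<Sum>i\<in>Basis. (x \<bullet> i) *\<^sub>R f i) \<bullet> y"
    by (simp add: sum scale)
  also have "\<dots> = x \<bullet> (\<Sum>i\<in>Basis. (f i \<bullet> y) *\<^sub>R i)"
    by (simp add: inner_sum_left inner_sum_right mult.commute)
  finally show ?thesis .
qed

lemma inner_badj:
  fixes f :: "'a::euclidean_space \<Rightarrow>\<^sub>L 'b::real_inner"
  shows "x \<bullet> badj f y = f x \<bullet> y"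
proof -
  have lin: "linear (blinfun_apply f)"
    by (simp add: blinfun.bounded_linear_right bounded_linear.linear)
  have "adjoint f = (\<lambda>y. \<Sum>i\<in>Basis. (f i \<bullet> y) *\<^sub>R i)"
    using inner_linear_euclidean_domain[OF lin] by (intro adjoint_unique) blast
  moreover have "bounded_linear (\<lambda>y. \<Sum>i\<in>Basis. (f i \<bullet> y) *\<^sub>R (i::'a))"
    by (intro bounded_linear_sum bounded_linear_scaleR_const bounded_linear_inner_right)
  ultimately have "badj f y = (\<Sum>i\<in>Basis. (f i \<bullet> y) *\<^sub>R i)"
    by (simp add: badj_def bounded_linear_Blinfun_apply)
  then show ?thesis
    by (simp only: inner_linear_euclidean_domain[OF lin, of x y])
qed

lemma nonneg_op_compress:
  fixes F :: "'a::euclidean_space \<Rightarrow>\<^sub>L 'b::real_inner"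
  assumes "nonneg_op M"
  shows "nonneg_op (F o\<^sub>L M o\<^sub>L badj F)"
  using assms unfolding nonneg_op_def by (simp add: inner_badj[symmetric])

lemma Phi_op_apply: "Phi_op \<phi> u v = (\<Sum>i\<in>UNIV. \<phi> (u i) (v $ i))"
proof -
  have "bounded_linear (\<lambda>v. \<Sum>i\<in>UNIV. \<phi> (u i) (v $ i))"
    by (intro bounded_linear_sum bounded_linear_compose[OF blinfun.bounded_linear_right]
        bounded_linear_vec_nth)
  then show ?thesis
    by (simp add: Phi_op_def bounded_linear_Blinfun_apply)
qed

lemma Phi_op_axis: "Phi_op \<phi> u (axis i x) = \<phi> (u i) x"
  by (simp add: Phi_op_apply axis_def blinfun.zero_right if_distrib cong: if_cong)

text \<open>Meant for finite pairwise orthogonal \<open>C\<close>; a zero vector in \<open>C\<close> contributes nothing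
  because \<open>0 / 0 = 0\<close>.\<close>
definition orthogonal_proj :: "'a::real_inner set \<Rightarrow> 'a \<Rightarrow> 'a" where
  "orthogonal_proj C w = (\<Sum>c\<in>C. (c \<bullet> w / (c \<bullet> c)) *\<^sub>R c)"

lemma orthogonal_proj_in_span: "orthogonal_proj C w \<in> span C"
  unfolding orthogonal_proj_def by (intro span_sum span_scale span_base)

lemma orthogonal_proj_self_adjoint: "x \<bullet> orthogonal_proj C w = orthogonal_proj C x \<bullet> w"
  unfolding orthogonal_proj_def inner_sum_left inner_sum_right
  by (rule sum.cong) (simp_all add: inner_commute)

lemma inner_orthogonal_proj:
  assumes "finite C" "pairwise orthogonal C" "c \<in> C"
  shows "c \<bullet> orthogonal_proj C w = c \<bullet> w"
proof -
  have "c \<bullet> orthogonal_proj C w = (\<Sum>c'\<in>C. if c' = c then c \<bullet> w else 0)"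
    unfolding orthogonal_proj_def inner_sum_right
    by (rule sum.cong) (use assms in \<open>auto simp: pairwise_def orthogonal_def inner_commute\<close>)
  with assms show ?thesis by simp
qed

lemma orthogonal_proj_residual:
  assumes "finite C" "pairwise orthogonal C" "x \<in> span C"
  shows "x \<bullet> (w - orthogonal_proj C w) = 0"
proof -
  have "orthogonal (w - orthogonal_proj C w) x"
    using assms(3)
  proof (rule orthogonal_to_span)
    fix c
    assume "c \<in> C"
    with inner_orthogonal_proj[OF assms(1,2)] show "orthogonal (w - orthogonal_proj C w) c"
      by (simp add: orthogonal_def inner_commute inner_diff_right)
  qed
  then show ?thesis
    by (simp add: orthogonal_def inner_commute)
qed

lemma orthogonal_proj_id:
  assumes "finite C" "pairwise orthogonal C" "x \<in> span C"
  shows "orthogonal_proj C x = x"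
proof -
  have "x - orthogonal_proj C x \<in> span C"
    using assms(3) orthogonal_proj_in_span by (rule span_diff)
  from orthogonal_proj_residual[OF assms(1,2) this, of x]
  show ?thesis by simp
qed

lemma norm_orthogonal_proj_le:
  assumes "finite C" "pairwise orthogonal C"
  shows "norm (orthogonal_proj C w) \<le> norm w"
proof -
  let ?p = "orthogonal_proj C w"
  have "norm ?p * norm ?p = ?p \<bullet> w"
    using orthogonal_proj_residual[OF assms orthogonal_proj_in_span, of w w]
    by (simp add: inner_diff_right norm_eq_sqrt_inner)
  also have "\<dots> \<le> norm ?p * norm w"
    by (rule norm_cauchy_schwarz)
  finally show ?thesis
    using norm_ge_zero[of w] by (auto simp: mult_le_cancel_left not_less)
qed

lemma compression_factors_through_euclidean:
  fixes \<Phi> :: "'a::euclidean_space \<Rightarrow>\<^sub>L 'w::real_inner" and Q :: "'w \<Rightarrow>\<^sub>L 'w"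
  assumes "C \<subseteq> range \<Phi>" and "nonneg_op Q"
  obtains M where "nonneg_op M"
    and "\<And>w. (\<Phi> o\<^sub>L M o\<^sub>L badj \<Phi>) w = orthogonal_proj C (Q (orthogonal_proj C w))"
proof -
  obtain z where z: "\<And>c. c \<in> C \<Longrightarrow> \<Phi> (z c) = c"
    using assms(1) by (metis f_inv_into_f subsetD)
  define S where "S w = (\<Sum>c\<in>C. (c \<bullet> w / (c \<bullet> c)) *\<^sub>R z c)" for w
  define S' where "S' v = (\<Sum>c\<in>C. (z c \<bullet> v / (c \<bullet> c)) *\<^sub>R c)" for v
  have "bounded_linear S" "bounded_linear S'"
    unfolding S_def[abs_def] S'_def[abs_def]
    by (intro bounded_linear_sum bounded_linear_scaleR_const
        bounded_linear_divide[THEN bounded_linear_compose] bounded_linear_inner_right)+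
  define M where "M = Blinfun S o\<^sub>L Q o\<^sub>L Blinfun S'"
  have M: "M v = S (Q (S' v))" for v
    by (simp add: M_def bounded_linear_Blinfun_apply \<open>bounded_linear S\<close> \<open>bounded_linear S'\<close>)
  have S_adjoint: "S w \<bullet> v = w \<bullet> S' v" for w v
    by (simp add: S_def S'_def inner_sum_left inner_sum_right inner_commute mult.commute)
  have "nonneg_op M"
    using assms(2) by (simp add: nonneg_op_def M S_adjoint)
  moreover have "\<Phi> (S w) = orthogonal_proj C w" for w
    by (simp add: S_def orthogonal_proj_def blinfun.sum_right blinfun.scaleR_right z)
  moreover have "S' (badj \<Phi> w) = orthogonal_proj C w" for w
    by (simp add: S'_def orthogonal_proj_def inner_badj z)
  ultimately show ?thesis
    using that by (simp add: M)
qed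

lemma badj_orthogonal_proj:
  fixes f :: "'a::euclidean_space \<Rightarrow>\<^sub>L 'w::real_inner"
  assumes "finite C" "pairwise orthogonal C" "\<And>x. f x \<in> span C"
  shows "badj f (orthogonal_proj C w) = badj f w"
proof -
  have "x \<bullet> badj f (orthogonal_proj C w) = x \<bullet> badj f w" for x
  proof -
    have "x \<bullet> badj f (orthogonal_proj C w) = orthogonal_proj C (f x) \<bullet> w"
      by (simp only: inner_badj orthogonal_proj_self_adjoint)
    also have "\<dots> = x \<bullet> badj f w"
      by (simp only: orthogonal_proj_id[OF assms] inner_badj)
    finally show ?thesis .
  qed
  then show ?thesis
    using vector_eq_ldot by blast
qed

lemma loss_compression_eq:
  fixes \<phi> :: "'u::euclidean_space \<Rightarrow> ('u \<Rightarrow>\<^sub>L 'w::real_inner)"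
    and Q R :: "'w \<Rightarrow>\<^sub>L 'w"
  assumes C: "finite C" "pairwise orthogonal C" and range: "\<And>i x. \<phi> (u i) x \<in> span C"
    and R: "\<And>w. R w = orthogonal_proj C (Q (orthogonal_proj C w))"
  shows "loss \<phi> u y R = loss \<phi> u y Q"
  unfolding loss_def R orthogonal_proj_id[OF C range] badj_orthogonal_proj[OF C range] ..

lemma norm_compression_le:
  fixes Q R :: "'a::real_inner \<Rightarrow>\<^sub>L 'a"
  assumes C: "finite C" "pairwise orthogonal C"
    and R: "\<And>w. R w = orthogonal_proj C (Q (orthogonal_proj C w))"
  shows "norm R \<le> norm Q"
proof (rule norm_blinfun_bound[OF norm_ge_zero])
  fix w
  have "norm (R w) \<le> norm (Q (orthogonal_proj C w))"
    unfolding R by (rule norm_orthogonal_proj_le[OF C])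
  also have "\<dots> \<le> norm Q * norm (orthogonal_proj C w)"
    by (rule norm_blinfun)
  also have "\<dots> \<le> norm Q * norm w"
    by (rule mult_left_mono[OF norm_orthogonal_proj_le[OF C] norm_ge_zero])
  finally show "norm (R w) \<le> norm Q * norm w" .
qed

lemma objP'_le_objP:
  fixes \<phi> :: "'u::euclidean_space \<Rightarrow> ('u \<Rightarrow>\<^sub>L 'w::real_inner)"
    and u y :: "'n::finite \<Rightarrow> 'u"
  assumes "\<gamma> \<ge> 0" and "nonneg_op Q"
  obtains M where "nonneg_op M" and "objP' \<phi> u y \<gamma> M \<le> objP \<phi> u y \<gamma> Q"
proof -
  let ?\<Phi> = "Phi_op \<phi> u"
  obtain C where C: "finite C" "pairwise orthogonal C"
    and span_C: "span C = span (blinfun_apply ?\<Phi> ` Basis)"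
    using basis_orthogonal[of "blinfun_apply ?\<Phi> ` Basis"] by auto
  have range_\<Phi>: "span C = range ?\<Phi>"
    using span_C span_linear_image[of ?\<Phi> Basis]
    by (simp add: blinfun.bounded_linear_right bounded_linear.linear)
  obtain M where M: "nonneg_op M"
    and M_compress: "\<And>w. (?\<Phi> o\<^sub>L M o\<^sub>L badj ?\<Phi>) w = orthogonal_proj C (Q (orthogonal_proj C w))"
    using compression_factors_through_euclidean[of C ?\<Phi> Q] range_\<Phi> span_superset assms(2)
    by blast
  have range_\<phi>: "\<phi> (u i) x \<in> span C" for i x
    using range_\<Phi> Phi_op_axis[of \<phi> u i x, symmetric] by auto
  have "loss \<phi> u y (?\<Phi> o\<^sub>L M o\<^sub>L badj ?\<Phi>) = loss \<phi> u y Q"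
    using C range_\<phi> M_compress by (rule loss_compression_eq)
  moreover have "norm (?\<Phi> o\<^sub>L M o\<^sub>L badj ?\<Phi>) \<le> norm Q"
    using C M_compress by (rule norm_compression_le)
  ultimately have "objP' \<phi> u y \<gamma> M \<le> objP \<phi> u y \<gamma> Q"
    using \<open>\<gamma> \<ge> 0\<close> by (simp add: objP'_def objP_def mult_left_mono)
  with M show ?thesis by (rule that)
qed

theorem theorem1:
  fixes \<phi> :: "'u::euclidean_space \<Rightarrow> ('u \<Rightarrow>\<^sub>L 'w::{real_inner, complete_space})"
    and u y :: "'n::finite \<Rightarrow> 'u"
    and \<gamma> :: real
  assumes "\<gamma> > 0"
  shows "((\<exists>Q. solves_P \<phi> u y \<gamma> Q) \<longleftrightarrow> (\<exists>M. solves_P' \<phi> u y \<gamma> M))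
    \<and> (\<forall>M. solves_P' \<phi> u y \<gamma> M \<longrightarrow>
          solves_P \<phi> u y \<gamma> (Phi_op \<phi> u o\<^sub>L M o\<^sub>L badj (Phi_op \<phi> u)))"
proof -
  let ?compress = "\<lambda>M. Phi_op \<phi> u o\<^sub>L M o\<^sub>L badj (Phi_op \<phi> u)"
  have P: "solves_P \<phi> u y \<gamma> = is_arg_min (objP \<phi> u y \<gamma>) nonneg_op"
    by (simp add: fun_eq_iff solves_P_def is_arg_min_linorder)
  have P': "solves_P' \<phi> u y \<gamma> = is_arg_min (objP \<phi> u y \<gamma> \<circ> ?compress) nonneg_op"
    by (simp add: fun_eq_iff solves_P'_def objP'_def is_arg_min_linorder)
  have "\<exists>M. nonneg_op M \<and> objP \<phi> u y \<gamma> (?compress M) \<le> objP \<phi> u y \<gamma> Q"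
    if "nonneg_op Q" for Q
    using objP'_le_objP[of \<gamma> Q \<phi> u y] assms that unfolding objP'_def by auto
  note reduction = is_arg_min_reduction[where P = nonneg_op and Q = nonneg_op and F = ?compress,
      OF nonneg_op_compress this]
  show ?thesis
    unfolding P P' using reduction by blast
qed

end
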